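(* Let $M,M'\in\mathrm{GL}(2,\mathbb{Z})$ be hyperbolic (no eigenvalue on the unit circle) and suppose they have the same fixed point counts, i.e. $a_m(M)=a_m(M')$ for all $m\in\mathbb{N}$, where $a_m(M)=\#\{x\in\mathbb{T}^2: M^m x=x\ (\mathrm{mod}\ 1)\}$. Then $\zeta_M(t)=\zeta_{M'}(t)$, where $\zeta_M(t)=\exp\big(\sum_{m\ge1}\frac{a_m(M)}{m}t^m\big)$. This implies $\det(M')=\det(M)$ and either $\mathrm{trace}(M')=\mathrm{trace}(M)$, or $\mathrm{trace}(M')=-\mathrm{trace}(M)$ together with $\det(M)=-1$.
   Context: $\mathbb{T}^2=\mathbb{R}^2/\mathbb{Z}^2$, with integer matrices acting by matrix multiplication mod $1$. *)

theory Defs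
  imports "HOL-Analysis.Analysis"
begin

primrec matpow :: "'a::semiring_1^'n^'n \<Rightarrow> nat \<Rightarrow> 'a^'n^'n" where
  "matpow A 0 = mat 1"
| "matpow A (Suc k) = A ** matpow A k"

definition GL2Z :: "int^2^2 \<Rightarrow> bool" where
  "GL2Z M \<longleftrightarrow> det M = 1 \<or> det M = -1"

definition hyperbolic :: "int^2^2 \<Rightarrow> bool" where
  "hyperbolic M \<longleftrightarrow>
     (\<forall>z::complex. det (mat z - map_matrix of_int M) = 0 \<longrightarrow> cmod z \<noteq> 1)"

text \<open>Points of the torus R^2/Z^2 are represented by their unique
  representatives in [0,1)^2; x is fixed by M^m mod 1 iff M^m x - x is integral.\<close>
definition torus_fixed_points :: "int^2^2 \<Rightarrow> nat \<Rightarrow> (real^2) set" where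
  "torus_fixed_points M m =
     {x::real^2. (\<forall>i. 0 \<le> x $ i \<and> x $ i < 1) \<and>
                 (\<forall>i. (map_matrix of_int (matpow M m) *v x - x) $ i \<in> \<int>)}"

definition fixcount :: "int^2^2 \<Rightarrow> nat \<Rightarrow> nat" where
  "fixcount M m = card (torus_fixed_points M m)"

definition zeta :: "int^2^2 \<Rightarrow> complex \<Rightarrow> complex" where
  "zeta M t = exp (\<Sum>k. of_nat (fixcount M (Suc k)) / of_nat (Suc k) * t ^ Suc k)"

end

theory Submission
  imports Defs
begin

text \<open>The fixed points of \<open>M\<^sup>m\<close> on the torus form the kernel of the torus endomorphism
  induced by \<open>M\<^sup>m - I\<close>, and the kernel of the endomorphism induced by a nonsingular integer
  matrix \<open>A\<close> has \<open>\<bar>det A\<bar>\<close> points: for a triangular matrix this is a direct count, and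
  integer row operations, which leave both the kernel and \<open>\<bar>det A\<bar>\<close> unchanged, reduce every
  matrix to triangular form by the Euclidean algorithm. Hence
  \<open>a\<^sub>1 = \<bar>det M - tr M + 1\<bar>\<close> and \<open>a\<^sub>2 = \<bar>(det M + 1)\<^sup>2 - (tr M)\<^sup>2\<bar>\<close>, with both
  quantities nonzero by hyperbolicity. Since \<open>det M = \<plusminus>1\<close>, these two numbers determine
  \<open>det M\<close> and \<open>tr M\<close> up to the stated sign ambiguity, while equality of the zeta
  functions is immediate from their definition.\<close>

definition torus_kernel :: "int \<Rightarrow> int \<Rightarrow> int \<Rightarrow> int \<Rightarrow> (real \<times> real) set" where
  "torus_kernel a b c d = {(x, y). 0 \<le> x \<and> x < 1 \<and> 0 \<le> y \<and> y < 1 \<and>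
     of_int a * x + of_int b * y \<in> \<int> \<and> of_int c * x + of_int d * y \<in> \<int>}"

lemma card_unit_interval_affine_Ints_pos:
  assumes "a > 0"
  shows "card {x::real. 0 \<le> x \<and> x < 1 \<and> of_int a * x + r \<in> \<int>} = nat a"
proof -
  let ?S = "{x::real. 0 \<le> x \<and> x < 1 \<and> of_int a * x + r \<in> \<int>}"
  let ?f = "\<lambda>n::int. (of_int n - r) / of_int a"
  have a: "(0::real) < of_int a" using assms by simp
  have "?S = ?f ` {\<lceil>r\<rceil>..<\<lceil>r\<rceil> + a}"
  proof (intro equalityI subsetI)
    fix x assume "x \<in> ?S"
    then obtain n where x: "0 \<le> x" "x < 1" and n: "of_int a * x + r = of_int n"
      by (auto elim: Ints_cases)
    have "0 \<le> of_int a * x" "of_int a * x < of_int a" using a x by simp_all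
    then have "r \<le> of_int n" "n - a < \<lceil>r\<rceil>" using n by (simp_all add: less_ceiling_iff)
    then have "n \<in> {\<lceil>r\<rceil>..<\<lceil>r\<rceil> + a}" by (simp add: ceiling_le_iff)
    moreover have "x = ?f n" using n a by (simp add: field_simps)
    ultimately show "x \<in> ?f ` {\<lceil>r\<rceil>..<\<lceil>r\<rceil> + a}" by blast
  next
    fix x assume "x \<in> ?f ` {\<lceil>r\<rceil>..<\<lceil>r\<rceil> + a}"
    then obtain n where n: "\<lceil>r\<rceil> \<le> n" "n - a < \<lceil>r\<rceil>" and x: "x = ?f n" by auto
    have "r \<le> of_int n" "of_int n < r + of_int a"
      using n by (auto simp: ceiling_le_iff less_ceiling_iff algebra_simps)
    moreover have "of_int a * x + r = of_int n" using x a by (simp add: field_simps)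
    ultimately show "x \<in> ?S" using x a by (auto simp: divide_less_eq_1_pos)
  qed
  moreover have "inj_on ?f {\<lceil>r\<rceil>..<\<lceil>r\<rceil> + a}" using a by (auto simp: inj_on_def field_simps)
  ultimately show ?thesis by (simp add: card_image)
qed

lemma card_unit_interval_affine_Ints:
  assumes "a \<noteq> 0"
  shows "card {x::real. 0 \<le> x \<and> x < 1 \<and> of_int a * x + r \<in> \<int>} = nat \<bar>a\<bar>"
proof (cases "a > 0")
  case True
  then show ?thesis using card_unit_interval_affine_Ints_pos by simp
next
  case False
  have "of_int (- a) * x + (- r) = - (of_int a * x + r)" for x :: real
    by simp
  then have "card {x::real. 0 \<le> x \<and> x < 1 \<and> of_int a * x + r \<in> \<int>} = nat (- a)"
    using card_unit_interval_affine_Ints_pos[of "- a" "- r"] False assms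
    by (simp only: minus_in_Ints_iff)
  then show ?thesis using False by simp
qed

lemma torus_kernel_swap_rows: "torus_kernel a b c d = torus_kernel c d a b"
  unfolding torus_kernel_def by auto

lemma torus_kernel_add_row2: "torus_kernel a b c d = torus_kernel (a + k * c) (b + k * d) c d"
proof -
  have row: "of_int (a + k * c) * x + of_int (b + k * d) * y
      = (of_int a * x + of_int b * y :: real) + of_int k * (of_int c * x + of_int d * y)" for x y
    by (simp add: algebra_simps)
  have "u + of_int k * v \<in> \<int> \<longleftrightarrow> u \<in> \<int>" if "v \<in> \<int>" for u v :: real
    using that by simp
  then show ?thesis unfolding torus_kernel_def row by (intro set_eqI) (auto split: prod.splits)
qed

lemma torus_kernel_add_row1: "torus_kernel a b c d = torus_kernel a b (c + k * a) (d + k * b)"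
  by (metis torus_kernel_swap_rows torus_kernel_add_row2)

lemma card_torus_kernel_triangular:
  assumes "a \<noteq> 0" "d \<noteq> 0"
  shows "card (torus_kernel a 0 c d) = nat \<bar>a * d\<bar>"
proof -
  define X where "X = {x::real. 0 \<le> x \<and> x < 1 \<and> of_int a * x + 0 \<in> \<int>}"
  define Y where "Y x = {y::real. 0 \<le> y \<and> y < 1 \<and> of_int d * y + of_int c * x \<in> \<int>}" for x
  have "torus_kernel a 0 c d = Sigma X Y"
    unfolding torus_kernel_def X_def Y_def by (auto simp: add.commute)
  moreover have "card X = nat \<bar>a\<bar>" "card (Y x) = nat \<bar>d\<bar>" for x
    unfolding X_def Y_def using assms card_unit_interval_affine_Ints by blast+
  moreover then have "finite X" "finite (Y x)" for x
    using assms by (metis card.infinite nat_0_iff abs_le_zero_iff)+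
  ultimately show ?thesis by (simp add: abs_mult nat_mult_distrib)
qed

lemma abs_sub_sgn_mult:
  fixes b d :: int
  assumes "b * d \<noteq> 0" "\<bar>d\<bar> \<le> \<bar>b\<bar>"
  shows "\<bar>b - sgn (b * d) * d\<bar> = \<bar>b\<bar> - \<bar>d\<bar>"
  using assms by (cases "b > 0"; cases "d > 0") (auto simp: sgn_mult)

lemma card_torus_kernel:
  "a * d - b * c \<noteq> 0 \<Longrightarrow> card (torus_kernel a b c d) = nat \<bar>a * d - b * c\<bar>"
proof (induction "nat \<bar>b\<bar> + nat \<bar>d\<bar>" arbitrary: a b c d rule: less_induct)
  case less
  consider "b = 0" | "d = 0" | "b * d \<noteq> 0" "\<bar>d\<bar> \<le> \<bar>b\<bar>" | "b * d \<noteq> 0" "\<bar>b\<bar> \<le> \<bar>d\<bar>"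
    by fastforce
  then show ?case
  proof cases
    case 1
    then show ?thesis using less.prems card_torus_kernel_triangular by simp
  next
    case 2
    then show ?thesis using less.prems card_torus_kernel_triangular[of c b a]
      by (simp add: torus_kernel_swap_rows[of a b] abs_mult mult.commute)
  next
    case 3
    define k where "k = - sgn (b * d)"
    have "nat \<bar>b + k * d\<bar> + nat \<bar>d\<bar> < nat \<bar>b\<bar> + nat \<bar>d\<bar>"
      using abs_sub_sgn_mult[OF 3] 3 unfolding k_def by auto
    moreover have "(a + k * c) * d - (b + k * d) * c = a * d - b * c" by algebra
    ultimately show ?thesis
      using less.hyps[of "b + k * d" d "a + k * c" c] less.prems torus_kernel_add_row2 by metis
  next
    case 4
    define k where "k = - sgn (b * d)"
    have "nat \<bar>b\<bar> + nat \<bar>d + k * b\<bar> < nat \<bar>b\<bar> + nat \<bar>d\<bar>"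
      using abs_sub_sgn_mult[of d b] 4 unfolding k_def by (auto simp: mult.commute)
    moreover have "a * (d + k * b) - b * (c + k * a) = a * d - b * c" by algebra
    ultimately show ?thesis
      using less.hyps[of b "d + k * b" a "c + k * a"] less.prems torus_kernel_add_row1 by metis
  qed
qed

lemma matrix_minus_id_apply:
  fixes A :: "int^2^2" and x :: "real^2"
  shows "(map_matrix of_int A *v x) $ 1 - x $ 1 = of_int (A$1$1 - 1) * x$1 + of_int (A$1$2) * x$2"
    and "(map_matrix of_int A *v x) $ 2 - x $ 2 = of_int (A$2$1) * x$1 + of_int (A$2$2 - 1) * x$2"
  by (simp_all add: matrix_vector_mult_def sum_2 algebra_simps)

lemma torus_fixed_points_eq_kernel:
  fixes M :: "int^2^2" and m :: nat
  defines "A \<equiv> matpow M m"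
  shows "(\<lambda>v. (v$1, v$2)) ` torus_fixed_points M m
           = torus_kernel (A$1$1 - 1) (A$1$2) (A$2$1) (A$2$2 - 1)"
proof (intro equalityI subsetI)
  fix p assume "p \<in> (\<lambda>v. (v$1, v$2)) ` torus_fixed_points M m"
  then show "p \<in> torus_kernel (A$1$1 - 1) (A$1$2) (A$2$1) (A$2$2 - 1)"
    unfolding torus_fixed_points_def torus_kernel_def A_def
    by (auto simp: forall_2 matrix_minus_id_apply)
next
  fix p assume "p \<in> torus_kernel (A$1$1 - 1) (A$1$2) (A$2$1) (A$2$2 - 1)"
  moreover obtain x y where "p = (x, y)" by fastforce
  ultimately have "vector [x, y] \<in> torus_fixed_points M m"
    and "p = (\<lambda>v. (v$1, v$2)) (vector [x, y] :: real^2)"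
    unfolding torus_fixed_points_def torus_kernel_def A_def
    by (auto simp: forall_2 matrix_minus_id_apply)
  then show "p \<in> (\<lambda>v. (v$1, v$2)) ` torus_fixed_points M m" by blast
qed

lemma det_minus_id_2:
  fixes A :: "'a::comm_ring_1^2^2"
  shows "(A$1$1 - 1) * (A$2$2 - 1) - A$1$2 * A$2$1 = det A - trace A + 1"
  by (simp add: det_2 trace_def sum_2 algebra_simps)

lemma fixcount_eq_abs_det:
  fixes M :: "int^2^2"
  assumes "det (matpow M m) - trace (matpow M m) + 1 \<noteq> 0"
  shows "fixcount M m = nat \<bar>det (matpow M m) - trace (matpow M m) + 1\<bar>"
proof -
  have "inj (\<lambda>v::real^2. (v$1, v$2))" by (auto simp: inj_def vec_eq_iff forall_2)
  then have "fixcount M m = card ((\<lambda>v. (v$1, v$2)) ` torus_fixed_points M m)"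
    unfolding fixcount_def by (simp add: card_image inj_on_subset)
  then show ?thesis
    using assms by (simp add: torus_fixed_points_eq_kernel card_torus_kernel det_minus_id_2)
qed

lemma det_char_poly_2:
  fixes M :: "int^2^2" and z :: complex
  shows "det (mat z - map_matrix of_int M) = z^2 - of_int (trace M) * z + of_int (det M)"
  by (simp add: det_2 trace_def sum_2 mat_def power2_eq_square algebra_simps)

lemma trace_square_2:
  fixes M :: "'a::comm_ring_1^2^2"
  shows "trace (M ** M) = (trace M)^2 - 2 * det M"
  by (simp add: det_2 trace_def sum_2 matrix_matrix_mult_def power2_eq_square algebra_simps)

lemma hyperbolic_char_poly_nonzero:
  fixes M :: "int^2^2"
  assumes "hyperbolic M"
  shows "det M - trace M + 1 \<noteq> 0" and "det M + trace M + 1 \<noteq> 0"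
proof -
  have "z^2 - of_int (trace M) * z + of_int (det M) \<noteq> 0" if "cmod z = 1" for z :: complex
    using assms that unfolding hyperbolic_def by (auto simp: det_char_poly_2)
  from this[of 1] this[of "-1"]
  have "complex_of_int (det M - trace M + 1) \<noteq> 0" "complex_of_int (det M + trace M + 1) \<noteq> 0"
    by (simp_all add: algebra_simps)
  then show "det M - trace M + 1 \<noteq> 0" "det M + trace M + 1 \<noteq> 0" by (metis of_int_0)+
qed

lemma hyperbolic_trace_square:
  fixes M :: "int^2^2"
  assumes "hyperbolic M" "det M = 1"
  shows "(trace M)^2 \<ge> 4"
proof (rule ccontr)
  assume "\<not> (trace M)^2 \<ge> 4"
  define r :: real where "r = of_int (trace M)"
  have "r^2 < 4" using \<open>\<not> (trace M)^2 \<ge> 4\<close> unfolding r_def by (simp flip: of_int_power)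
  define s where "s = sqrt (4 - r^2)"
  have s: "s * s = 4 - r^2" unfolding s_def using \<open>r^2 < 4\<close> by simp
  \<comment> \<open>\<open>z\<close> and \<open>cnj z\<close> are the roots of \<open>z\<^sup>2 - r z + 1\<close>, whose discriminant is negative\<close>
  define z where "z = Complex (r / 2) (s / 2)"
  have "z^2 - of_int (trace M) * z + of_int (det M) = 0"
    unfolding z_def using s assms(2)
    by (simp add: complex_eq_iff power2_eq_square r_def[symmetric] field_simps)
  moreover have "cmod z = 1"
    unfolding z_def using s by (simp add: complex_norm power2_eq_square field_simps)
  ultimately show False
    using assms(1) unfolding hyperbolic_def det_char_poly_2 by blast
qed

lemma fixcount_one_two:
  fixes M :: "int^2^2"
  assumes "hyperbolic M"
  shows "fixcount M 1 = nat \<bar>det M - trace M + 1\<bar>"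
    and "fixcount M 2 = nat \<bar>(det M + 1)^2 - (trace M)^2\<bar>"
proof -
  note nonzero = hyperbolic_char_poly_nonzero[OF assms]
  show "fixcount M 1 = nat \<bar>det M - trace M + 1\<bar>"
    using fixcount_eq_abs_det[of M 1] nonzero by simp
  have "det (matpow M 2) - trace (matpow M 2) + 1 = (det M + 1)^2 - (trace M)^2"
    by (simp add: numeral_2_eq_2 det_mul trace_square_2 power2_eq_square algebra_simps)
  moreover have "(det M + 1)^2 - (trace M)^2 = (det M - trace M + 1) * (det M + trace M + 1)"
    by algebra
  ultimately show "fixcount M 2 = nat \<bar>(det M + 1)^2 - (trace M)^2\<bar>"
    using fixcount_eq_abs_det[of M 2] nonzero by simp
qed

lemma square_ne_square_plus_4:
  fixes s t :: int
  assumes "s \<noteq> 0"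
  shows "t^2 \<noteq> s^2 + 4"
proof
  assume e: "t^2 = s^2 + 4"
  then have "\<bar>s\<bar> < \<bar>t\<bar>" using abs_le_square_iff[of t s] by simp
  then have "(\<bar>s\<bar> + 1)^2 \<le> \<bar>t\<bar>^2" by (intro power_mono) simp_all
  then have "\<bar>s\<bar> = 1" using e assms by (simp add: power2_sum)
  then have "s^2 = 1" by (cases "s \<ge> 0") auto
  then have "\<bar>t\<bar>^2 = 5" using e by simp
  moreover have "\<bar>t\<bar>^2 \<le> 2^2" if "\<bar>t\<bar> \<le> 2"
    using that by (intro power_mono) simp_all
  moreover have "3^2 \<le> \<bar>t\<bar>^2" if "\<not> \<bar>t\<bar> \<le> 2"
    using that by (intro power_mono) simp_all
  ultimately show False by (cases "\<bar>t\<bar> \<le> 2") simp_all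
qed

lemma det_trace_from_counts:
  fixes D D' t t' :: int
  assumes "D = 1 \<or> D = -1" "D' = 1 \<or> D' = -1"
    and "D - t + 1 \<noteq> 0" "D' - t' + 1 \<noteq> 0"
    and "D = 1 \<Longrightarrow> t^2 \<ge> 4" "D' = 1 \<Longrightarrow> t'^2 \<ge> 4"
    and count1: "\<bar>D - t + 1\<bar> = \<bar>D' - t' + 1\<bar>"
    and count2: "\<bar>(D + 1)^2 - t^2\<bar> = \<bar>(D' + 1)^2 - t'^2\<bar>"
  shows "D' = D \<and> (t' = t \<or> (t' = -t \<and> D = -1))"
proof -
  consider "D = 1" "D' = 1" | "D = -1" "D' = -1" | "D = 1" "D' = -1" | "D = -1" "D' = 1"
    using assms(1,2) by blast
  then show ?thesis
  proof cases
    case 1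
    then have "t' = t \<or> t' = -t" using count2 assms(5,6) by (auto simp: power2_eq_iff)
    moreover have "t \<noteq> 0" using 1 assms(5) by auto
    then have "t' \<noteq> -t" using count1 1 by (auto simp: abs_if split: if_splits)
    ultimately show ?thesis using 1 by blast
  next
    case 2
    then show ?thesis using count2 by (auto simp: power2_eq_iff)
  next
    case 3
    then show ?thesis using count2 assms(4,5) square_ne_square_plus_4[of t' t] by simp
  next
    case 4
    then show ?thesis using count2 assms(3,6) square_ne_square_plus_4[of t t'] by simp
  qed
qed

theorem corollary16:
  fixes M M' :: "int^2^2"
  assumes "GL2Z M" and "GL2Z M'"
    and "hyperbolic M" and "hyperbolic M'"
    and "\<forall>m\<ge>1. fixcount M m = fixcount M' m"
  shows "zeta M = zeta M' \<and> det M' = det M \<and>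
         (trace M' = trace M \<or> (trace M' = - trace M \<and> det M = -1))"
proof -
  have "fixcount M (Suc k) = fixcount M' (Suc k)" for k
    using assms(5) by simp
  then have "zeta M = zeta M'"
    by (intro ext) (simp add: zeta_def)
  moreover have "\<bar>det M - trace M + 1\<bar> = \<bar>det M' - trace M' + 1\<bar>"
    using assms(5) fixcount_one_two(1)[OF assms(3)] fixcount_one_two(1)[OF assms(4)] by auto
  moreover have "\<bar>(det M + 1)^2 - (trace M)^2\<bar> = \<bar>(det M' + 1)^2 - (trace M')^2\<bar>"
    using assms(5) fixcount_one_two(2)[OF assms(3)] fixcount_one_two(2)[OF assms(4)] by auto
  moreover have "det M' = det M \<and> (trace M' = trace M \<or> (trace M' = - trace M \<and> det M = -1))"
    using assms(1,2) unfolding GL2Z_def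
    by (intro det_trace_from_counts calculation(2,3) hyperbolic_char_poly_nonzero(1)
        hyperbolic_trace_square assms(3,4))
  ultimately show ?thesis by blast
qed

end
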